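(* Let $r>0$ and let $Z$ be a set of homeomorphisms $[0,r)\to[0,r)$ such that: $(\alpha)z\ge\alpha$ for all $z\in Z$ and $\alpha\in[0,r)$; $\mathrm{supp}(z)$ is an interval for every $z\in Z$; and $\bigcup_{z\in Z}\mathrm{supp}(z)$ is dense in $(0,r)$. Let $f$ be a permutation of $[0,r)$ that commutes with every $z\in Z$, is right-continuous at every point of $[0,r)$, and has finitely many points of discontinuity. Then $f$ is continuous.
   Context: Maps act on the right. For a permutation $x$ of a set $S$, $\mathrm{fix}(x)$ is its set of fixed points and $\mathrm{supp}(x)=S\setminus\mathrm{fix}(x)$. *)

theory Defs
  imports "HOL-Analysis.Analysis"
begin

definition supp_on :: "real set \<Rightarrow> (real \<Rightarrow> real) \<Rightarrow> real set" where
  "supp_on S z = {a \<in> S. z a \<noteq> a}"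

end

theory Submission
  imports Defs
begin

text \<open>
  Each z in Z conjugates f to itself, so z permutes the finite set D of
  discontinuities of f; as z only moves points upwards it fixes D pointwise.  Let d in D, d > 0.
  For a point x of the support of some z just left of d, the support of z is an interval below
  d containing both x and f x, and the z-orbit of f x increases to the right endpoint of that
  interval, which lies in [x,d].  Hence some y = z^k x satisfies x <= y < d and x < f y < d:
  f takes values near d at points just left of d.  Applying the same argument to the inverse
  of z (reduced to the increasing case by the reflection a |-> -a) gives such points just right
  of d, so right-continuity forces f d = d.  Finally f is continuous and injective on a small
  interval left of d, hence monotone there, and the approximations give the left limit d.
\<close>

lemma funpow_maps_into:
  assumes "h ` S \<subseteq> S" and "a \<in> S"
  shows "(h ^^ k) a \<in> S"
  using assms by (induction k) auto

lemma supp_on_funpow: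
  assumes maps: "h ` S \<subseteq> S" and inj: "inj_on h S" and t: "t \<in> supp_on S h"
  shows "(h ^^ k) t \<in> supp_on S h"
proof (induction k)
  case 0
  show ?case using t by simp
next
  case (Suc k)
  let ?t = "(h ^^ k) t"
  have "?t \<in> S" "h ?t \<noteq> ?t" using Suc by (auto simp: supp_on_def)
  moreover have "h ?t \<in> S" using maps \<open>?t \<in> S\<close> by blast
  ultimately have "h (h ?t) \<noteq> h ?t" using inj by (metis inj_onD)
  then show ?case using \<open>h ?t \<in> S\<close> by (simp add: supp_on_def)
qed

lemma funpow_commute_on:
  assumes maps: "h ` S \<subseteq> S" and comm: "\<forall>a\<in>S. h (f a) = f (h a)" and a: "a \<in> S"
  shows "f ((h ^^ k) a) = (h ^^ k) (f a)"
proof (induction k)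
  case 0
  show ?case by simp
next
  case (Suc k)
  have "f ((h ^^ Suc k) a) = h (f ((h ^^ k) a))"
    using comm funpow_maps_into[OF maps a] by simp
  then show ?case using Suc by simp
qed

lemma incseq_orbit:
  assumes maps: "h ` S \<subseteq> S" and up: "\<forall>a\<in>S. a \<le> h a" and a: "a \<in> S"
  shows "incseq (\<lambda>k. (h ^^ k) a)"
  by (rule incseq_SucI) (simp add: up funpow_maps_into[OF maps a])

lemma supp_on_below_fixed_point:
  fixes h :: "real \<Rightarrow> real"
  assumes I: "is_interval (supp_on S h)" and d: "d \<in> S" "h d = d"
    and x: "x \<in> supp_on S h" "x < d" and t: "t \<in> supp_on S h"
  shows "t < d"
proof (rule ccontr)
  assume "\<not> t < d"
  then have "d \<in> supp_on S h" using I x t unfolding is_interval_1 by (meson less_imp_le not_le)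
  then show False using d by (simp add: supp_on_def)
qed

text \<open>The key dynamical fact: if h moves points upwards and fixes d, and x < d lies in the
  interval support of h, then the orbit of any u in that support increases to the upper end of
  the support, which lies in (x,d]; so the orbit eventually enters the gap (x,d).\<close>
lemma orbit_enters_gap:
  fixes h :: "real \<Rightarrow> real"
  assumes S: "is_interval S" and cont: "continuous_on S h" and maps: "h ` S \<subseteq> S"
    and inj: "inj_on h S" and up: "\<forall>a\<in>S. a \<le> h a" and I: "is_interval (supp_on S h)"
    and d: "d \<in> S" "h d = d" and x: "x \<in> supp_on S h" "x < d" and u: "u \<in> supp_on S h"
  shows "\<exists>k. x < (h ^^ k) u \<and> (h ^^ k) u < d"
proof -
  define s where "s k = (h ^^ k) u" for k
  have s_supp: "s k \<in> supp_on S h" for k unfolding s_def by (rule supp_on_funpow[OF maps inj u])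
  have s_S: "s k \<in> S" for k using s_supp[of k] by (simp add: supp_on_def)
  have s_below: "s k < d" for k by (rule supp_on_below_fixed_point[OF I d x s_supp])
  have uS: "u \<in> S" using u by (simp add: supp_on_def)
  have inc: "incseq s" unfolding s_def by (rule incseq_orbit[OF maps up uS])
  have bdd: "bdd_above (range s)" using s_below by (intro bdd_aboveI[of _ d]) (auto intro: less_imp_le)
  define q where "q = (SUP k. s k)"
  have lim: "s \<longlonglongrightarrow> q" unfolding q_def by (rule LIMSEQ_incseq_SUP[OF bdd inc])
  have uq: "u \<le> q" using cSUP_upper[OF _ bdd, of 0] by (simp add: q_def s_def)
  have qd: "q \<le> d" unfolding q_def by (rule cSUP_least) (use s_below less_imp_le in auto)
  have qS: "q \<in> S" using S uS d(1) uq qd unfolding is_interval_1 by blast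
  \<comment> \<open>the limit of the orbit is a fixed point of h, hence lies outside its support\<close>
  have "(\<lambda>k. h (s k)) \<longlonglongrightarrow> h q"
    using continuous_on_tendsto_compose[OF cont lim qS] s_S by auto
  moreover have "(\<lambda>k. h (s k)) \<longlonglongrightarrow> q" using LIMSEQ_Suc[OF lim] by (simp add: s_def)
  ultimately have "h q = q" using LIMSEQ_unique by blast
  then have "q \<notin> supp_on S h" by (simp add: supp_on_def)
  then have "x < q" using I u x(1) uq unfolding is_interval_1 by (meson not_le)
  then have "\<forall>\<^sub>F k in sequentially. x < s k" by (rule order_tendstoD(1)[OF lim])
  then obtain k where "x < s k" by (auto simp: eventually_sequentially)
  then show ?thesis using s_below unfolding s_def by blast
qed

lemma supp_on_commuting:
  assumes fmaps: "f ` S \<subseteq> S" and finj: "inj_on f S" and hmaps: "h ` S \<subseteq> S"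
    and comm: "\<forall>a\<in>S. h (f a) = f (h a)" and x: "x \<in> supp_on S h"
  shows "f x \<in> supp_on S h"
proof -
  have xS: "x \<in> S" and "h x \<noteq> x" using x by (auto simp: supp_on_def)
  then have "f (h x) \<noteq> f x" using finj hmaps by (metis image_subset_iff inj_onD)
  then show ?thesis using comm xS fmaps by (auto simp: supp_on_def)
qed

text \<open>If f commutes with an upward-moving h fixing d, then starting from any x < d in the
  support of h one finds y in [x,d) with f y in (x,d): iterate h on x and on f x simultaneously.\<close>
lemma approximation_below_fixed_point:
  fixes h f :: "real \<Rightarrow> real"
  assumes S: "is_interval S" and cont: "continuous_on S h" and maps: "h ` S \<subseteq> S"
    and inj: "inj_on h S" and up: "\<forall>a\<in>S. a \<le> h a" and I: "is_interval (supp_on S h)"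
    and fmaps: "f ` S \<subseteq> S" and finj: "inj_on f S" and comm: "\<forall>a\<in>S. h (f a) = f (h a)"
    and d: "d \<in> S" "h d = d" and x: "x \<in> supp_on S h" "x < d"
  shows "\<exists>y. x \<le> y \<and> y < d \<and> x < f y \<and> f y < d"
proof -
  have xS: "x \<in> S" using x by (simp add: supp_on_def)
  have "f x \<in> supp_on S h" by (rule supp_on_commuting[OF fmaps finj maps comm x(1)])
  then obtain k where k: "x < (h ^^ k) (f x)" "(h ^^ k) (f x) < d"
    using orbit_enters_gap[OF S cont maps inj up I d x] by blast
  let ?y = "(h ^^ k) x"
  have "x \<le> ?y" using incseq_orbit[OF maps up xS] by (metis funpow_0 incseq_def zero_le)
  moreover have "?y < d"
    by (rule supp_on_below_fixed_point[OF I d x supp_on_funpow[OF maps inj x(1)]])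
  moreover have "f ?y = (h ^^ k) (f x)" by (rule funpow_commute_on[OF maps comm xS])
  ultimately show ?thesis using k by auto
qed

text \<open>Conjugation by the reflection a |-> -a turns downward-moving maps into upward-moving ones.\<close>
definition reflect :: "(real \<Rightarrow> real) \<Rightarrow> real \<Rightarrow> real" where
  "reflect h a = - h (- a)"

lemma supp_on_reflect: "supp_on (uminus ` S) (reflect h) = uminus ` supp_on S h"
  by (force simp: supp_on_def reflect_def)

lemma continuous_on_reflect:
  assumes "continuous_on S h"
  shows "continuous_on (uminus ` S) (reflect h)"
  unfolding reflect_def
  by (intro continuous_on_minus continuous_on_compose2[OF assms] continuous_intros) auto

lemma approximation_above_fixed_point:
  fixes h f :: "real \<Rightarrow> real"
  assumes S: "is_interval S" and cont: "continuous_on S h" and maps: "h ` S \<subseteq> S"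
    and inj: "inj_on h S" and down: "\<forall>a\<in>S. h a \<le> a" and I: "is_interval (supp_on S h)"
    and fmaps: "f ` S \<subseteq> S" and finj: "inj_on f S" and comm: "\<forall>a\<in>S. h (f a) = f (h a)"
    and d: "d \<in> S" "h d = d" and x: "x \<in> supp_on S h" "d < x"
  shows "\<exists>y. d < y \<and> y \<le> x \<and> d < f y \<and> f y < x"
proof -
  let ?S = "uminus ` S"
  have "\<exists>y. - x \<le> y \<and> y < - d \<and> - x < reflect f y \<and> reflect f y < - d"
  proof (rule approximation_below_fixed_point[of ?S "reflect h"])
    show "is_interval ?S" using S by simp
    show "continuous_on ?S (reflect h)" by (rule continuous_on_reflect[OF cont])
    show "reflect h ` ?S \<subseteq> ?S" "reflect f ` ?S \<subseteq> ?S"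
      using maps fmaps by (auto simp: reflect_def)
    show "inj_on (reflect h) ?S" "inj_on (reflect f) ?S"
      using inj finj by (auto simp: reflect_def inj_on_def)
    show "\<forall>a\<in>?S. a \<le> reflect h a" using down by (auto simp: reflect_def)
    show "is_interval (supp_on ?S (reflect h))" using I by (simp add: supp_on_reflect)
    show "\<forall>a\<in>?S. reflect h (reflect f a) = reflect f (reflect h a)"
      using comm by (auto simp: reflect_def)
    show "- d \<in> ?S" "reflect h (- d) = - d" using d by (auto simp: reflect_def)
    show "- x \<in> supp_on ?S (reflect h)" using x by (simp add: supp_on_reflect)
    show "- x < - d" using x by simp
  qed
  then obtain y where "- x \<le> y" "y < - d" "- x < reflect f y" "reflect f y < - d" by blast
  then show ?thesis by (intro exI[of _ "- y"]) (auto simp: reflect_def)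
qed

text \<open>If a homeomorphism z of S commutes with f, then f is continuous at a as soon as it is
  continuous at z a, because f = g o f o z on S for the inverse g of z.\<close>
lemma continuous_within_conjugate:
  fixes f z g :: "'a::metric_space \<Rightarrow> 'a"
  assumes homeo: "homeomorphism S S z g" and fmaps: "f ` S \<subseteq> S"
    and comm: "\<forall>a\<in>S. z (f a) = f (z a)" and a: "a \<in> S"
    and cont: "continuous (at (z a) within S) f"
  shows "continuous (at a within S) f"
proof -
  have zS: "z ` S = S" by (rule homeomorphism_image1[OF homeo])
  have cz: "continuous (at a within S) z"
    using homeomorphism_cont1[OF homeo] a by (simp add: continuous_on_eq_continuous_within)
  have "f (z a) \<in> S" using fmaps zS a by blast
  then have cg: "continuous (at (f (z a)) within S) g"
    using homeomorphism_cont2[OF homeo] by (simp add: continuous_on_eq_continuous_within)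
  have "continuous (at a within S) (f \<circ> z)"
    by (rule continuous_within_compose[OF cz]) (simp add: zS cont)
  moreover have "(f \<circ> z) ` S \<subseteq> S" using fmaps zS by fastforce
  then have "continuous (at ((f \<circ> z) a) within (f \<circ> z) ` S) g"
    using continuous_within_subset[OF cg] by simp
  ultimately have "continuous (at a within S) (g \<circ> (f \<circ> z))"
    by (rule continuous_within_compose)
  moreover have "(g \<circ> (f \<circ> z)) a' = f a'" if "a' \<in> S" for a'
    using comm homeomorphism_apply1[OF homeo] fmaps that by (metis comp_apply image_subset_iff)
  ultimately show ?thesis using continuous_transform_within[where x=a and s=S and \<delta>=1 and g=f] a by auto
qed

text \<open>An injective map moving points upwards fixes every point of a finite invariant set: it
  permutes the set, so the nonnegative displacements sum to zero.\<close>
lemma finite_invariant_set_fixed: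
  fixes h :: "real \<Rightarrow> real"
  assumes fin: "finite D" and inv: "h ` D \<subseteq> D" and inj: "inj_on h D"
    and up: "\<forall>a\<in>D. a \<le> h a" and d: "d \<in> D"
  shows "h d = d"
proof -
  have "(\<Sum>a\<in>D. h a) = (\<Sum>a\<in>h ` D. a)" by (simp add: sum.reindex[OF inj])
  also have "\<dots> = (\<Sum>a\<in>D. a)" using endo_inj_surj[OF fin inv inj] by simp
  finally have "(\<Sum>a\<in>D. h a - a) = 0" by (simp add: sum_subtractf)
  moreover have "(\<Sum>a\<in>D. h a - a) = 0 \<longleftrightarrow> (\<forall>a\<in>D. h a - a = 0)"
    by (rule sum_nonneg_eq_0_iff[OF fin]) (use up in auto)
  ultimately have "\<forall>a\<in>D. h a - a = 0" by blast
  then show ?thesis using d by simp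
qed

lemma homeomorphism_inverse_down:
  assumes homeo: "homeomorphism S S z g" and up: "\<forall>a\<in>S. a \<le> z a"
  shows "\<forall>a\<in>S. g a \<le> a"
proof
  fix a
  assume a: "a \<in> S"
  have "g a \<in> S" using homeomorphism_image2[OF homeo] a by blast
  then have "g a \<le> z (g a)" using up by blast
  then show "g a \<le> a" using homeomorphism_apply2[OF homeo a] by simp
qed

lemma supp_on_homeomorphism_inverse:
  assumes homeo: "homeomorphism S S z g"
  shows "supp_on S g = supp_on S z"
proof -
  have "g a = a \<longleftrightarrow> z a = a" if "a \<in> S" for a
    using homeomorphism_apply1[OF homeo that] homeomorphism_apply2[OF homeo that] by metis
  then show ?thesis unfolding supp_on_def by blast
qed

lemma homeomorphism_inverse_commute:
  assumes homeo: "homeomorphism S S z g" and fmaps: "f ` S \<subseteq> S"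
    and comm: "\<forall>a\<in>S. z (f a) = f (z a)"
  shows "\<forall>a\<in>S. g (f a) = f (g a)"
proof
  fix a
  assume a: "a \<in> S"
  have ga: "g a \<in> S" using homeomorphism_image2[OF homeo] a by blast
  then have "z (f (g a)) = f a" using comm homeomorphism_apply2[OF homeo a] by simp
  then have "g (f a) = g (z (f (g a)))" by simp
  also have "\<dots> = f (g a)" using homeomorphism_apply1[OF homeo] fmaps ga by blast
  finally show "g (f a) = f (g a)" .
qed

lemma right_limit_from_approximation:
  fixes f :: "real \<Rightarrow> real"
  assumes lim: "(f \<longlongrightarrow> l) (at_right d)"
    and approx: "\<forall>\<epsilon>>0. \<forall>\<eta>>0. \<exists>y. d < y \<and> y < d + \<eta> \<and> \<bar>f y - c\<bar> < \<epsilon>"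
  shows "l = c"
proof (rule ccontr)
  assume "l \<noteq> c"
  then have e: "\<bar>l - c\<bar> / 2 > 0" by simp
  from tendstoD[OF lim e] obtain b where b: "d < b" "\<forall>y>d. y < b \<longrightarrow> dist (f y) l < \<bar>l - c\<bar> / 2"
    unfolding eventually_at_right_field by blast
  obtain y where y: "d < y" "y < d + (b - d)" "\<bar>f y - c\<bar> < \<bar>l - c\<bar> / 2"
    using approx[rule_format, OF e, of "b - d"] b(1) by auto
  then have "\<bar>f y - l\<bar> < \<bar>l - c\<bar> / 2" using b(2) by (auto simp: dist_real_def)
  then show False using y(3) by (simp add: abs_if split: if_splits)
qed

text \<open>A continuous injective (hence monotone) f on (b,d) that takes values arbitrarily close
  to l at points arbitrarily close to the left of d tends to l from the left at d.\<close>
lemma left_limit_from_approximation: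
  fixes f :: "real \<Rightarrow> real"
  assumes bd: "b < d" and cont: "continuous_on {b<..<d} f" and inj: "inj_on f {b<..<d}"
    and approx: "\<forall>\<epsilon>>0. \<forall>\<eta>>0. \<exists>y. d - \<eta> < y \<and> y < d \<and> \<bar>f y - l\<bar> < \<epsilon>"
  shows "(f \<longlongrightarrow> l) (at_left d)"
proof (rule tendstoI)
  fix \<epsilon> :: real
  assume e: "\<epsilon> > 0"
  obtain y1 where y1: "b < y1" "y1 < d" "\<bar>f y1 - l\<bar> < \<epsilon>" using approx[rule_format, OF e, of "d - b"] bd by auto
  \<comment> \<open>between two points with values near l, the monotone f stays near l\<close>
  have "dist (f y) l < \<epsilon>" if y: "y1 < y" "y < d" for y
  proof -
    obtain y2 where y2: "y < y2" "y2 < d" "\<bar>f y2 - l\<bar> < \<epsilon>" using approx[rule_format, OF e, of "d - y"] y(2) by auto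
    have sub: "{y1..y2} \<subseteq> {b<..<d}" using y1 y2 by auto
    have "(f y1 < f y \<and> f y < f y2) \<or> (f y2 < f y \<and> f y < f y1)"
      using continuous_inj_imp_mono[OF y(1) y2(1) continuous_on_subset[OF cont sub]
          inj_on_subset[OF inj sub]] .
    then show ?thesis using y1 y2 by (auto simp: dist_real_def)
  qed
  then show "\<forall>\<^sub>F y in at_left d. dist (f y) l < \<epsilon>"
    unfolding eventually_at_left_field using y1(2) by blast
qed

lemma homeomorphism_inj_on:
  assumes "homeomorphism S T z g"
  shows "inj_on z S"
  by (rule inj_on_inverseI[where g = g]) (rule homeomorphism_apply1[OF assms])

lemma finite_set_avoid_left:
  fixes D :: "real set"
  assumes "finite D"
  shows "\<exists>b<a. \<forall>x\<in>D. x \<notin> {b<..<a}"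
proof -
  obtain \<delta> where \<delta>: "\<delta> > 0" "\<forall>x\<in>D. x \<noteq> a \<longrightarrow> \<delta> \<le> dist a x"
    using finite_set_avoid[OF assms] by blast
  then have "\<forall>x\<in>D. x \<notin> {a - \<delta><..<a}" by (force simp: dist_real_def)
  then show ?thesis using \<delta>(1) by (intro exI[of _ "a - \<delta>"]) auto
qed

locale commuting_homeomorphisms =
  fixes r :: real and Z :: "(real \<Rightarrow> real) set" and f :: "real \<Rightarrow> real"
  assumes homeo: "\<forall>z\<in>Z. \<exists>g. homeomorphism {0..<r} {0..<r} z g"
    and up: "\<forall>z\<in>Z. \<forall>a\<in>{0..<r}. z a \<ge> a"
    and supp_interval: "\<forall>z\<in>Z. is_interval (supp_on {0..<r} z)"
    and dense: "{0<..<r} \<subseteq> closure (\<Union>z\<in>Z. supp_on {0..<r} z)"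
    and bij: "bij_betw f {0..<r} {0..<r}"
    and comm: "\<forall>z\<in>Z. \<forall>a\<in>{0..<r}. z (f a) = f (z a)"
    and right_cont: "\<forall>a\<in>{0..<r}. continuous (at_right a) f"
    and finite_discont: "finite {a \<in> {0..<r}. \<not> continuous (at a within {0..<r}) f}"
begin

lemma f_maps: "f ` {0..<r} \<subseteq> {0..<r}"
  using bij by (simp add: bij_betw_def)

lemma f_inj: "inj_on f {0..<r}"
  using bij by (rule bij_betw_imp_inj_on)

lemma supp_dense:
  assumes "0 \<le> a" "a < b" "b \<le> r"
  obtains z x where "z \<in> Z" "x \<in> supp_on {0..<r} z" "a < x" "x < b"
proof -
  let ?U = "\<Union>z\<in>Z. supp_on {0..<r} z"
  have "(a + b) / 2 \<in> {a<..<b}" using assms by simp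
  moreover have "(a + b) / 2 \<in> closure ?U" using assms dense by auto
  ultimately have "{a<..<b} \<inter> closure ?U \<noteq> {}" by blast
  then have "{a<..<b} \<inter> ?U \<noteq> {}" by (simp add: open_Int_closure_eq_empty)
  then show ?thesis using that by auto
qed

text \<open>The finitely many discontinuities are permuted by each z in Z, and since z moves points
  only upwards, each of them is fixed.\<close>
lemma discontinuity_fixed:
  assumes z: "z \<in> Z" and d: "d \<in> {a \<in> {0..<r}. \<not> continuous (at a within {0..<r}) f}"
  shows "z d = d"
proof -
  let ?D = "{a \<in> {0..<r}. \<not> continuous (at a within {0..<r}) f}"
  obtain g where g: "homeomorphism {0..<r} {0..<r} z g" using homeo z by blast
  have "z a \<in> ?D" if a: "a \<in> ?D" for a
  proof -
    have "z a \<in> {0..<r}" using homeomorphism_image1[OF g] a by blast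
    moreover have "\<not> continuous (at (z a) within {0..<r}) f"
      using continuous_within_conjugate[OF g f_maps] comm z a by blast
    ultimately show ?thesis by blast
  qed
  moreover have "inj_on z ?D" using homeomorphism_inj_on[OF g] by (rule inj_on_subset) blast
  ultimately show ?thesis
    using finite_invariant_set_fixed[OF finite_discont] up z d by blast
qed

lemma approximation_left:
  assumes d: "0 < d" "d < r" and fixed: "\<forall>z\<in>Z. z d = d"
  shows "\<forall>\<epsilon>>0. \<forall>\<eta>>0. \<exists>y. d - \<eta> < y \<and> y < d \<and> \<bar>f y - d\<bar> < \<epsilon>"
proof (intro allI impI)
  fix \<epsilon> \<eta> :: real
  assume "\<epsilon> > 0" "\<eta> > 0"
  define m where "m = min (min \<epsilon> \<eta>) d"
  have m: "0 < m" "m \<le> \<epsilon>" "m \<le> \<eta>" "m \<le> d" using \<open>\<epsilon> > 0\<close> \<open>\<eta> > 0\<close> d by (auto simp: m_def)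
  then obtain z x where z: "z \<in> Z" and x: "x \<in> supp_on {0..<r} z" "d - m < x" "x < d"
    using supp_dense[of "d - m" d] d by auto
  obtain g where g: "homeomorphism {0..<r} {0..<r} z g" using homeo z by blast
  have z_up: "\<forall>a\<in>{0..<r}. a \<le> z a" using up z by blast
  have "\<exists>y. x \<le> y \<and> y < d \<and> x < f y \<and> f y < d"
  proof (rule approximation_below_fixed_point[OF _ homeomorphism_cont1[OF g] _
        homeomorphism_inj_on[OF g] z_up _ f_maps f_inj])
    show "is_interval {0..<r::real}" by (simp add: is_interval_1)
    show "z ` {0..<r} \<subseteq> {0..<r}" using homeomorphism_image1[OF g] by simp
    show "is_interval (supp_on {0..<r} z)" using supp_interval z by blast
    show "\<forall>a\<in>{0..<r}. z (f a) = f (z a)" using comm z by blast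
    show "d \<in> {0..<r}" "z d = d" using d fixed z by auto
  qed (use x in auto)
  then show "\<exists>y. d - \<eta> < y \<and> y < d \<and> \<bar>f y - d\<bar> < \<epsilon>" using x m by force
qed

lemma approximation_right:
  assumes d: "0 < d" "d < r" and fixed: "\<forall>z\<in>Z. z d = d"
  shows "\<forall>\<epsilon>>0. \<forall>\<eta>>0. \<exists>y. d < y \<and> y < d + \<eta> \<and> \<bar>f y - d\<bar> < \<epsilon>"
proof (intro allI impI)
  fix \<epsilon> \<eta> :: real
  assume "\<epsilon> > 0" "\<eta> > 0"
  define m where "m = min (min \<epsilon> \<eta>) (r - d)"
  have m: "0 < m" "m \<le> \<epsilon>" "m \<le> \<eta>" "m \<le> r - d" using \<open>\<epsilon> > 0\<close> \<open>\<eta> > 0\<close> d by (auto simp: m_def)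
  then obtain z x where z: "z \<in> Z" and x: "x \<in> supp_on {0..<r} z" "d < x" "x < d + m"
    using supp_dense[of d "d + m"] d by auto
  obtain g where g: "homeomorphism {0..<r} {0..<r} z g" using homeo z by blast
  have supp_g: "supp_on {0..<r} g = supp_on {0..<r} z" by (rule supp_on_homeomorphism_inverse[OF g])
  have "g d = d" using homeomorphism_apply1[OF g] fixed z d by (metis atLeastLessThan_iff less_imp_le)
  have z_up: "\<forall>a\<in>{0..<r}. a \<le> z a" using up z by blast
  have z_comm: "\<forall>a\<in>{0..<r}. z (f a) = f (z a)" using comm z by blast
  have "\<exists>y. d < y \<and> y \<le> x \<and> d < f y \<and> f y < x"
  proof (rule approximation_above_fixed_point[OF _ homeomorphism_cont2[OF g] _
        homeomorphism_inj_on[OF homeomorphism_symD[OF g]] homeomorphism_inverse_down[OF g z_up]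
        _ f_maps f_inj homeomorphism_inverse_commute[OF g f_maps z_comm]])
    show "is_interval {0..<r::real}" by (simp add: is_interval_1)
    show "g ` {0..<r} \<subseteq> {0..<r}" using homeomorphism_image2[OF g] by simp
    show "is_interval (supp_on {0..<r} g)" using supp_interval z supp_g by simp
    show "d \<in> {0..<r}" "g d = d" using d \<open>g d = d\<close> by auto
    show "x \<in> supp_on {0..<r} g" using x supp_g by simp
  qed (use x in auto)
  then show "\<exists>y. d < y \<and> y < d + \<eta> \<and> \<bar>f y - d\<bar> < \<epsilon>" using x m by force
qed

text \<open>At the left endpoint, right-continuity is already continuity within [0,r).\<close>
lemma continuous_at_zero:
  assumes "0 < r"
  shows "continuous (at 0 within {0..<r}) f"
proof -
  have "(f \<longlongrightarrow> f 0) (at 0 within {0..})"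
    using right_cont assms by (simp add: continuous_within at_within_Ici_at_right)
  then have "(f \<longlongrightarrow> f 0) (at 0 within {0..<r})" by (rule tendsto_within_subset) auto
  then show ?thesis by (simp add: continuous_within)
qed

text \<open>At an interior point d, a discontinuity would be fixed by all of Z; the approximations from
  the right force f d = d, and those from the left, together with monotonicity of f on the
  discontinuity-free interval just left of d, give the left limit d as well.\<close>
lemma continuous_at_interior:
  assumes d: "0 < d" "d < r"
  shows "continuous (at d within {0..<r}) f"
proof (rule ccontr)
  let ?D = "{a \<in> {0..<r}. \<not> continuous (at a within {0..<r}) f}"
  assume disc: "\<not> continuous (at d within {0..<r}) f"
  then have fixed: "\<forall>z\<in>Z. z d = d" using discontinuity_fixed d by auto
  have right_lim: "(f \<longlongrightarrow> f d) (at_right d)" using right_cont d by (simp add: continuous_within)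
  have fd: "f d = d"
    by (rule right_limit_from_approximation[OF right_lim approximation_right[OF d fixed]])
  obtain b where b: "b < d" "\<forall>x\<in>?D. x \<notin> {b<..<d}"
    using finite_set_avoid_left[OF finite_discont] by blast
  let ?J = "{max b 0<..<d}"
  have J: "?J \<subseteq> {0..<r}" using d by auto
  have "continuous_on ?J f"
    unfolding continuous_on_eq_continuous_within
  proof
    fix t
    assume t: "t \<in> ?J"
    then have "t \<in> {0..<r}" "t \<in> {b<..<d}" using J by auto
    then have "continuous (at t within {0..<r}) f" using b(2) by blast
    then show "continuous (at t within ?J) f" using J by (rule continuous_within_subset)
  qed
  moreover have "inj_on f ?J" using f_inj J by (rule inj_on_subset)
  moreover have "max b 0 < d" using b(1) d by simp
  ultimately have "(f \<longlongrightarrow> d) (at_left d)"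
    using left_limit_from_approximation[OF _ _ _ approximation_left[OF d fixed]] by blast
  then have left_lim: "(f \<longlongrightarrow> f d) (at_left d)" using fd by simp
  have "continuous (at d) f"
    unfolding continuous_at by (rule filterlim_split_at[OF left_lim right_lim])
  then show False using disc continuous_at_imp_continuous_within by blast
qed

end

theorem lemma3p2:
  fixes r :: real and Z :: "(real \<Rightarrow> real) set" and f :: "real \<Rightarrow> real"
  assumes "r > 0"
    and "\<forall>z\<in>Z. \<exists>g. homeomorphism {0..<r} {0..<r} z g"
    and "\<forall>z\<in>Z. \<forall>a\<in>{0..<r}. z a \<ge> a"
    and "\<forall>z\<in>Z. is_interval (supp_on {0..<r} z)"
    and "{0<..<r} \<subseteq> closure (\<Union>z\<in>Z. supp_on {0..<r} z)"
    and "bij_betw f {0..<r} {0..<r}"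
    and "\<forall>z\<in>Z. \<forall>a\<in>{0..<r}. z (f a) = f (z a)"
    and "\<forall>a\<in>{0..<r}. continuous (at_right a) f"
    and "finite {a \<in> {0..<r}. \<not> continuous (at a within {0..<r}) f}"
  shows "continuous_on {0..<r} f"
proof -
  interpret commuting_homeomorphisms r Z f
    by (rule commuting_homeomorphisms.intro) (fact assms)+
  show ?thesis
    unfolding continuous_on_eq_continuous_within
  proof
    fix a
    assume "a \<in> {0..<r}"
    then consider "a = 0" | "0 < a" "a < r" by fastforce
    then show "continuous (at a within {0..<r}) f"
      using continuous_at_zero[OF assms(1)] continuous_at_interior by cases auto
  qed
qed

end
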